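(* Let $\Pi_1,\Pi_2$ be hereditary class properties, $p$ a positive integer, and $f_1,f_2:\mathbb N\to\mathbb N$ non-decreasing functions. If a class $\mathscr C$ has an $f_i$-bounded $\Pi_i$-decomposition with parameter $p$ for $i=1,2$, then $\mathscr C$ has an $f_1f_2$-bounded $\Pi_1\cap\Pi_2$-decomposition with parameter $p$.
   Context: Graphs are finite and simple. A hereditary class is a class closed under isomorphism and induced subgraphs; a hereditary class property is a set $\Pi$ of hereditary classes such that $\mathscr C\in\Pi$, $\mathscr D$ hereditary, $\mathscr D\subseteq\mathscr C$ imply $\mathscr D\in\Pi$. For non-decreasing $f$ and positive integer $p$, $\mathscr C$ has an $f$-bounded $\Pi$-decomposition with parameter $p$ if there is $\mathscr D_p\in\Pi$ such that every $G\in\mathscr C$ has a partition $V_1,\dots,V_N$ of $V(G)$ with $N\le f(|G|)$ and $G[V_{i_1}\cup\dots\cup V_{i_p}]\in\mathscr D_p$ for all $i_1,\dots,i_p\in[N]$. *)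

theory Defs
  imports Main
begin

type_synonym 'a graph = "'a set \<times> 'a set set"

definition is_graph :: "'a graph \<Rightarrow> bool" where
  "is_graph G \<longleftrightarrow> finite (fst G) \<and> (\<forall>e\<in>snd G. e \<subseteq> fst G \<and> card e = 2)"

definition induced :: "'a graph \<Rightarrow> 'a set \<Rightarrow> 'a graph" where
  "induced G S = (S, {e \<in> snd G. e \<subseteq> S})"

definition graph_iso :: "'a graph \<Rightarrow> 'a graph \<Rightarrow> bool" where
  "graph_iso G H \<longleftrightarrow> (\<exists>f. bij_betw f (fst G) (fst H) \<and>
     (\<forall>x\<in>fst G. \<forall>y\<in>fst G. {x, y} \<in> snd G \<longleftrightarrow> {f x, f y} \<in> snd H))"

definition hereditary :: "'a graph set \<Rightarrow> bool" where
  "hereditary C \<longleftrightarrow> (\<forall>G\<in>C. is_graph G) \<and>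
     (\<forall>G\<in>C. \<forall>H. is_graph H \<and> graph_iso G H \<longrightarrow> H \<in> C) \<and>
     (\<forall>G\<in>C. \<forall>S. S \<subseteq> fst G \<longrightarrow> induced G S \<in> C)"

definition hereditary_property :: "'a graph set set \<Rightarrow> bool" where
  "hereditary_property \<Pi> \<longleftrightarrow> (\<forall>C\<in>\<Pi>. hereditary C) \<and>
     (\<forall>C\<in>\<Pi>. \<forall>D. hereditary D \<and> D \<subseteq> C \<longrightarrow> D \<in> \<Pi>)"

definition has_decomposition ::
  "(nat \<Rightarrow> nat) \<Rightarrow> 'a graph set set \<Rightarrow> nat \<Rightarrow> 'a graph set \<Rightarrow> bool" where
  "has_decomposition f \<Pi> p C \<longleftrightarrow> (\<exists>D\<in>\<Pi>. \<forall>G\<in>C. \<exists>N::nat. \<exists>V::nat \<Rightarrow> 'a set.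
      N \<le> f (card (fst G)) \<and>
      (\<Union>i\<in>{1..N}. V i) = fst G \<and>
      (\<forall>i\<in>{1..N}. \<forall>j\<in>{1..N}. i \<noteq> j \<longrightarrow> V i \<inter> V j = {}) \<and>
      (\<forall>\<iota>::nat \<Rightarrow> nat. (\<forall>k<p. \<iota> k \<in> {1..N}) \<longrightarrow>
          induced G (\<Union>k<p. V (\<iota> k)) \<in> D))"

end

theory Submission
  imports Defs
begin

text \<open>Take the common refinement of the two partitions, with parts indexed by pairs of
indices and hence at most f1 f2 many. Any p of its parts lie inside p parts of each original
partition, so by heredity they induce a graph in both witness classes D1 and D2. Their
intersection is hereditary and contained in each, so it belongs to both properties.\<close>

lemma hereditary_Int:
  assumes "hereditary A" and "hereditary B"
  shows "hereditary (A \<inter> B)"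
  unfolding hereditary_def
proof (intro conjI ballI allI impI)
  fix G assume "G \<in> A \<inter> B"
  then show "is_graph G"
    using assms(1) unfolding hereditary_def by blast
next
  fix G H assume "G \<in> A \<inter> B" and "is_graph H \<and> graph_iso G H"
  then show "H \<in> A \<inter> B"
    using assms unfolding hereditary_def by (meson IntD1 IntD2 IntI)
next
  fix G S assume "G \<in> A \<inter> B" and "S \<subseteq> fst G"
  then show "induced G S \<in> A \<inter> B"
    using assms unfolding hereditary_def by (meson IntD1 IntD2 IntI)
qed

lemma hereditary_property_hereditary:
  "hereditary_property \<Pi> \<Longrightarrow> D \<in> \<Pi> \<Longrightarrow> hereditary D"
  unfolding hereditary_property_def by (elim conjE) (erule bspec)

lemma hereditary_property_subset:
  "hereditary_property \<Pi> \<Longrightarrow> C \<in> \<Pi> \<Longrightarrow> hereditary D \<Longrightarrow> D \<subseteq> C \<Longrightarrow> D \<in> \<Pi>"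
  unfolding hereditary_property_def by (elim conjE) (drule bspec, assumption, blast)

lemma hereditary_property_Int_mem:
  assumes "hereditary_property \<Pi>1" and "hereditary_property \<Pi>2"
    and "D1 \<in> \<Pi>1" and "D2 \<in> \<Pi>2"
  shows "D1 \<inter> D2 \<in> \<Pi>1 \<inter> \<Pi>2"
proof -
  have "hereditary (D1 \<inter> D2)"
    using assms by (intro hereditary_Int hereditary_property_hereditary)
  then show ?thesis
    using assms hereditary_property_subset[of _ _ "D1 \<inter> D2"] by blast
qed

lemma induced_induced: "S \<subseteq> T \<Longrightarrow> induced (induced G T) S = induced G S"
  unfolding induced_def by auto

lemma hereditary_induced_subset:
  assumes "hereditary D" and "induced G T \<in> D" and "S \<subseteq> T"
  shows "induced G S \<in> D"
proof -
  have "induced (induced G T) S \<in> D"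
    using assms unfolding hereditary_def by (auto simp: induced_def)
  then show ?thesis using induced_induced[OF assms(3)] by simp
qed

definition is_partition :: "'a set \<Rightarrow> nat \<Rightarrow> (nat \<Rightarrow> 'a set) \<Rightarrow> bool" where
  "is_partition S N V \<longleftrightarrow> (\<Union>i\<in>{1..N}. V i) = S \<and>
     (\<forall>i\<in>{1..N}. \<forall>j\<in>{1..N}. i \<noteq> j \<longrightarrow> V i \<inter> V j = {})"

definition unions_in :: "'a graph set \<Rightarrow> nat \<Rightarrow> 'a graph \<Rightarrow> nat \<Rightarrow> (nat \<Rightarrow> 'a set) \<Rightarrow> bool" where
  "unions_in D p G N V \<longleftrightarrow>
     (\<forall>\<iota>::nat \<Rightarrow> nat. (\<forall>k<p. \<iota> k \<in> {1..N}) \<longrightarrow> induced G (\<Union>k<p. V (\<iota> k)) \<in> D)"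

definition decomposes :: "(nat \<Rightarrow> nat) \<Rightarrow> 'a graph set \<Rightarrow> nat \<Rightarrow> 'a graph \<Rightarrow> bool" where
  "decomposes f D p G \<longleftrightarrow>
     (\<exists>N V. N \<le> f (card (fst G)) \<and> is_partition (fst G) N V \<and> unions_in D p G N V)"

lemma has_decomposition_iff:
  "has_decomposition f \<Pi> p C \<longleftrightarrow> (\<exists>D\<in>\<Pi>. \<forall>G\<in>C. decomposes f D p G)"
  unfolding has_decomposition_def decomposes_def is_partition_def unions_in_def by simp

lemma bij_betw_div_mod:
  fixes N1 N2 :: nat
  shows "bij_betw (\<lambda>i. ((i - 1) div N2 + 1, (i - 1) mod N2 + 1))
           {1..N1 * N2} ({1..N1} \<times> {1..N2})"
    (is "bij_betw ?h ?I ?P")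
proof -
  have "inj_on ?h ?I"
  proof (rule inj_onI)
    fix i j assume "i \<in> ?I" "j \<in> ?I" "?h i = ?h j"
    then have "i - 1 = j - 1" by (metis div_mod_decomp add_right_cancel prod.inject)
    with \<open>i \<in> ?I\<close> \<open>j \<in> ?I\<close> show "i = j" by auto
  qed
  moreover have "?h ` ?I \<subseteq> ?P"
  proof
    fix x assume "x \<in> ?h ` ?I"
    then obtain i where i: "i \<in> ?I" and x: "x = ?h i" by blast
    then have "N2 > 0" and "i - 1 < N1 * N2" by (auto intro: Nat.gr0I)
    then have "(i - 1) div N2 < N1" by (simp add: div_less_iff_less_mult)
    with \<open>N2 > 0\<close> show "x \<in> ?P" unfolding x by (simp add: Suc_leI)
  qed
  moreover have "card (?h ` ?I) = card ?P"
    using card_image[OF \<open>inj_on ?h ?I\<close>] by (simp add: card_cartesian_product)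
  ultimately show ?thesis
    unfolding bij_betw_def by (simp add: card_subset_eq)
qed

lemma bij_betw_Times_memD:
  assumes "bij_betw h I (A \<times> B)" and "i \<in> I"
  shows "fst (h i) \<in> A" and "snd (h i) \<in> B"
  using bij_betw_apply[OF assms] by auto

lemma is_partitionD:
  assumes "is_partition S N V"
  shows "(\<Union>i\<in>{1..N}. V i) = S"
    and "\<And>i j. i \<in> {1..N} \<Longrightarrow> j \<in> {1..N} \<Longrightarrow> i \<noteq> j \<Longrightarrow> V i \<inter> V j = {}"
  using assms unfolding is_partition_def by simp_all

lemma is_partition_refine:
  assumes V1: "is_partition S N1 V1" and V2: "is_partition S N2 V2"
    and h: "bij_betw h {1..M} ({1..N1} \<times> {1..N2})"
  shows "is_partition S M (\<lambda>i. V1 (fst (h i)) \<inter> V2 (snd (h i)))"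
  unfolding is_partition_def
proof (intro conjI ballI impI)
  note cover1 = is_partitionD(1)[OF V1] and cover2 = is_partitionD(1)[OF V2]
  note h_in = bij_betw_Times_memD[OF h]
  show "(\<Union>i\<in>{1..M}. V1 (fst (h i)) \<inter> V2 (snd (h i))) = S"
  proof
    show "(\<Union>i\<in>{1..M}. V1 (fst (h i)) \<inter> V2 (snd (h i))) \<subseteq> S"
      using cover1 h_in(1) by blast
  next
    show "S \<subseteq> (\<Union>i\<in>{1..M}. V1 (fst (h i)) \<inter> V2 (snd (h i)))"
    proof
      fix x assume "x \<in> S"
      then obtain a b where "a \<in> {1..N1}" "x \<in> V1 a" "b \<in> {1..N2}" "x \<in> V2 b"
        using cover1 cover2 by blast
      moreover have "(a, b) \<in> h ` {1..M}"
        using h \<open>a \<in> {1..N1}\<close> \<open>b \<in> {1..N2}\<close> by (simp add: bij_betw_def)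
      then obtain i where "i \<in> {1..M}" "(a, b) = h i" by blast
      ultimately have "x \<in> V1 (fst (h i)) \<inter> V2 (snd (h i))"
        by (metis IntI fst_conv snd_conv)
      with \<open>i \<in> {1..M}\<close> show "x \<in> (\<Union>i\<in>{1..M}. V1 (fst (h i)) \<inter> V2 (snd (h i)))"
        by blast
    qed
  qed
next
  fix i j assume i: "i \<in> {1..M}" and j: "j \<in> {1..M}" and "i \<noteq> j"
  then have "h i \<noteq> h j"
    using h unfolding bij_betw_def inj_on_def by blast
  then consider "fst (h i) \<noteq> fst (h j)" | "snd (h i) \<noteq> snd (h j)"
    using prod_eqI by blast
  then show "V1 (fst (h i)) \<inter> V2 (snd (h i)) \<inter> (V1 (fst (h j)) \<inter> V2 (snd (h j))) = {}"
  proof cases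
    case 1
    then have "V1 (fst (h i)) \<inter> V1 (fst (h j)) = {}"
      using is_partitionD(2)[OF V1] bij_betw_Times_memD(1)[OF h i] bij_betw_Times_memD(1)[OF h j]
      by blast
    then show ?thesis by blast
  next
    case 2
    then have "V2 (snd (h i)) \<inter> V2 (snd (h j)) = {}"
      using is_partitionD(2)[OF V2] bij_betw_Times_memD(2)[OF h i] bij_betw_Times_memD(2)[OF h j]
      by blast
    then show ?thesis by blast
  qed
qed

lemma unions_in_shrink:
  assumes "hereditary D" and "unions_in D p G N V"
    and "\<And>i. i \<in> {1..M} \<Longrightarrow> g i \<in> {1..N}"
    and "\<And>i. i \<in> {1..M} \<Longrightarrow> W i \<subseteq> V (g i)"
  shows "unions_in D p G M W"
  unfolding unions_in_def
proof (intro allI impI)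
  fix \<iota> :: "nat \<Rightarrow> nat" assume \<iota>: "\<forall>k<p. \<iota> k \<in> {1..M}"
  then have "induced G (\<Union>k<p. V (g (\<iota> k))) \<in> D"
    using assms(2,3) unfolding unions_in_def by simp
  moreover have "(\<Union>k<p. W (\<iota> k)) \<subseteq> (\<Union>k<p. V (g (\<iota> k)))"
    using \<iota> assms(4) by blast
  ultimately show "induced G (\<Union>k<p. W (\<iota> k)) \<in> D"
    using hereditary_induced_subset[OF assms(1)] by blast
qed

lemma common_refinement:
  assumes "hereditary D1" and "hereditary D2"
    and "is_partition (fst G) N1 V1" and "unions_in D1 p G N1 V1"
    and "is_partition (fst G) N2 V2" and "unions_in D2 p G N2 V2"
  obtains W where "is_partition (fst G) (N1 * N2) W" and "unions_in (D1 \<inter> D2) p G (N1 * N2) W"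
proof
  define h where "h i = ((i - 1) div N2 + 1, (i - 1) mod N2 + 1)" for i
  have h: "bij_betw h {1..N1 * N2} ({1..N1} \<times> {1..N2})"
    unfolding h_def by (rule bij_betw_div_mod)
  note h_in = bij_betw_Times_memD[OF h]
  define W where "W i = V1 (fst (h i)) \<inter> V2 (snd (h i))" for i
  show "is_partition (fst G) (N1 * N2) W"
    unfolding W_def using assms(3,5) h by (rule is_partition_refine)
  have "unions_in D1 p G (N1 * N2) W"
    by (rule unions_in_shrink[OF assms(1,4) h_in(1)]) (auto simp: W_def)
  moreover have "unions_in D2 p G (N1 * N2) W"
    by (rule unions_in_shrink[OF assms(2,6) h_in(2)]) (auto simp: W_def)
  ultimately show "unions_in (D1 \<inter> D2) p G (N1 * N2) W"
    unfolding unions_in_def by blast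
qed

lemma decomposes_Int:
  assumes "hereditary D1" and "hereditary D2"
    and "decomposes f1 D1 p G" and "decomposes f2 D2 p G"
  shows "decomposes (\<lambda>n. f1 n * f2 n) (D1 \<inter> D2) p G"
proof -
  obtain N1 V1 where "N1 \<le> f1 (card (fst G))"
    and V1: "is_partition (fst G) N1 V1" "unions_in D1 p G N1 V1"
    using assms(3) unfolding decomposes_def by blast
  obtain N2 V2 where "N2 \<le> f2 (card (fst G))"
    and V2: "is_partition (fst G) N2 V2" "unions_in D2 p G N2 V2"
    using assms(4) unfolding decomposes_def by blast
  obtain W where "is_partition (fst G) (N1 * N2) W" "unions_in (D1 \<inter> D2) p G (N1 * N2) W"
    using common_refinement[OF assms(1,2) V1 V2] .
  moreover have "N1 * N2 \<le> f1 (card (fst G)) * f2 (card (fst G))"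
    using \<open>N1 \<le> f1 (card (fst G))\<close> \<open>N2 \<le> f2 (card (fst G))\<close> by (rule mult_le_mono)
  ultimately show ?thesis
    unfolding decomposes_def by blast
qed

theorem mainTheorem9:
  fixes \<Pi>1 \<Pi>2 :: "'a graph set set" and C :: "'a graph set"
    and f1 f2 :: "nat \<Rightarrow> nat" and p :: nat
  assumes "hereditary_property \<Pi>1" and "hereditary_property \<Pi>2"
    and "p > 0" and "mono f1" and "mono f2"
    and "has_decomposition f1 \<Pi>1 p C" and "has_decomposition f2 \<Pi>2 p C"
  shows "has_decomposition (\<lambda>n. f1 n * f2 n) (\<Pi>1 \<inter> \<Pi>2) p C"
proof -
  obtain D1 where D1: "D1 \<in> \<Pi>1" and dec1: "\<forall>G\<in>C. decomposes f1 D1 p G"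
    using assms(6) unfolding has_decomposition_iff by blast
  obtain D2 where D2: "D2 \<in> \<Pi>2" and dec2: "\<forall>G\<in>C. decomposes f2 D2 p G"
    using assms(7) unfolding has_decomposition_iff by blast
  have "hereditary D1" "hereditary D2"
    using assms(1,2) D1 D2 by (auto intro: hereditary_property_hereditary)
  then have "\<forall>G\<in>C. decomposes (\<lambda>n. f1 n * f2 n) (D1 \<inter> D2) p G"
    using dec1 dec2 by (blast intro: decomposes_Int)
  then show ?thesis
    unfolding has_decomposition_iff
    using hereditary_property_Int_mem[OF assms(1,2) D1 D2] by blast
qed

end
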